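(* Let $\{e_j\}_{j=1}^d$ be an orthonormal basis of $\mathbb C^d$. There is a map $F:\mathbb R^{3d-2}\to\mathbb C^d$ (depending on the basis) such that the following holds. Let $m>0$, let $x\in\mathbb C^d\setminus\{0\}$ and $\epsilon\in\mathbb R^{3d-2}$ satisfy $|\langle x,e_j\rangle|^2-|\epsilon_j|\ge m\|x\|_\infty^2$ for all $j\in\{1,\dots,d\}$, and let $C=\frac{(1+\sqrt2)\|\epsilon\|_\infty+\|x\|_\infty^2}{m\|x\|_\infty^2}$. Then $y=(y_1,\dots,y_d)=F(\widetilde{\mathcal A}_{\{e_j\}}(x,\epsilon))$ satisfies, for all $k\in\{1,\dots,d\}$, $$\left|y_k-\frac{\overline{x_1}}{|x_1|}x_k\right|\le\left(\frac{2+\sqrt2}{m}\,\frac{1-C^{k-1}}{1-C}+\frac{C^{k-1}}{2\sqrt m}\right)\frac{\|\epsilon\|_\infty}{\|x\|_\infty}.$$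
   Context: $\mathbb C^d$ has the standard inner product $\langle u,v\rangle=\sum u_k\overline{v_k}$. Here $x_k=\langle x,e_k\rangle$ and $\|x\|_\infty=\max_k|x_k|$ (coordinates with respect to the basis), $\|\epsilon\|_\infty=\max_j|\epsilon_j|$. Measurement vectors: $f_j=e_j$ ($1\le j\le d$), $f_j=e_{j-d}-e_{j-d+1}$ ($d+1\le j\le 2d-1$), $f_j=e_{j-(2d-1)}-ie_{j-(2d-1)+1}$ ($2d\le j\le 3d-2$); noisy measurements $\widetilde{\mathcal A}_{\{e_j\}}(x,\epsilon)=(|\langle x,f_j\rangle|^2+\epsilon_j)_{j=1}^{3d-2}$. The expression $\frac{1-C^{k-1}}{1-C}$ denotes $\sum_{i=0}^{k-2}C^i$ (which equals the quotient when $C\ne1$). *)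

theory Defs
  imports Complex_Main
begin

text \<open>Vectors of C^d are represented as functions nat => complex, of which only the
  components with index in {1..d} are relevant. Vectors of R^(3d-2) are functions
  nat => real of which only the components with index in {1..3d-2} are relevant.\<close>

definition cinner :: "nat \<Rightarrow> (nat \<Rightarrow> complex) \<Rightarrow> (nat \<Rightarrow> complex) \<Rightarrow> complex" where
  "cinner d u v = (\<Sum>k=1..d. u k * cnj (v k))"

definition is_zero_vec :: "nat \<Rightarrow> (nat \<Rightarrow> complex) \<Rightarrow> bool" where
  "is_zero_vec d x \<longleftrightarrow> (\<forall>k\<in>{1..d}. x k = 0)"

definition orthonormal_basis :: "nat \<Rightarrow> (nat \<Rightarrow> nat \<Rightarrow> complex) \<Rightarrow> bool" where
  "orthonormal_basis d e \<longleftrightarrow>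
     (\<forall>i\<in>{1..d}. \<forall>j\<in>{1..d}. cinner d (e i) (e j) = (if i = j then 1 else 0)) \<and>
     (\<forall>v::nat \<Rightarrow> complex. \<exists>c::nat \<Rightarrow> complex. \<forall>l\<in>{1..d}. v l = (\<Sum>j=1..d. c j * e j l))"

definition coord :: "nat \<Rightarrow> (nat \<Rightarrow> nat \<Rightarrow> complex) \<Rightarrow> (nat \<Rightarrow> complex) \<Rightarrow> nat \<Rightarrow> complex" where
  "coord d e x k = cinner d x (e k)"

definition sup_norm_coord :: "nat \<Rightarrow> (nat \<Rightarrow> nat \<Rightarrow> complex) \<Rightarrow> (nat \<Rightarrow> complex) \<Rightarrow> real" where
  "sup_norm_coord d e x = Max ((\<lambda>k. cmod (coord d e x k)) ` {1..d})"

definition sup_norm_real :: "nat \<Rightarrow> (nat \<Rightarrow> real) \<Rightarrow> real" where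
  "sup_norm_real n eps = Max ((\<lambda>j. \<bar>eps j\<bar>) ` {1..n})"

definition meas_vec :: "nat \<Rightarrow> (nat \<Rightarrow> nat \<Rightarrow> complex) \<Rightarrow> nat \<Rightarrow> (nat \<Rightarrow> complex)" where
  "meas_vec d e j =
     (if j \<le> d then e j
      else if j \<le> 2*d - 1 then (\<lambda>l. e (j - d) l - e (j - d + 1) l)
      else (\<lambda>l. e (j - (2*d - 1)) l - \<i> * e (j - (2*d - 1) + 1) l))"

definition noisy_meas :: "nat \<Rightarrow> (nat \<Rightarrow> nat \<Rightarrow> complex) \<Rightarrow> (nat \<Rightarrow> complex) \<Rightarrow> (nat \<Rightarrow> real) \<Rightarrow> (nat \<Rightarrow> real)" where
  "noisy_meas d e x eps =
     (\<lambda>j. if j \<in> {1..3*d-2} then (cmod (cinner d x (meas_vec d e j)))^2 + eps j else 0)"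

end

theory Submission
  imports Defs
begin

text \<open>The measurements against \<open>e\<^sub>k\<close>, \<open>e\<^sub>k - e\<^sub>k\<^sub>+\<^sub>1\<close> and \<open>e\<^sub>k - i e\<^sub>k\<^sub>+\<^sub>1\<close> determine
  \<open>x\<^sub>k \<overline>x\<^sub>k\<^sub>+\<^sub>1\<close> by polarization, up to an error \<open>(1 + \<surd>2) \<parallel>\<epsilon>\<parallel>\<^sub>\<infinity>\<close>. Starting from
  \<open>y\<^sub>1 = \<surd>b\<^sub>1 \<approx> |x\<^sub>1|\<close>, the recursion \<open>y\<^sub>k\<^sub>+\<^sub>1 = \<overline>z\<^sub>k y\<^sub>k / b\<^sub>k\<close> reconstructs
  \<open>x\<^sub>k\<^sub>+\<^sub>1\<close> up to the global phase \<open>\<overline>x\<^sub>1/|x\<^sub>1|\<close>. Each step multiplies the previous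
  error by at most \<open>C\<close> and adds \<open>(2 + \<surd>2) \<parallel>\<epsilon>\<parallel>\<^sub>\<infinity> / (m \<parallel>x\<parallel>\<^sub>\<infinity>)\<close>, because the
  lower bound \<open>m \<parallel>x\<parallel>\<^sub>\<infinity>\<^sup>2\<close> keeps the divisors \<open>b\<^sub>k\<close> away from zero; unrolling this
  affine recursion gives the geometric sum.\<close>

lemma cmod_diff_square: "(cmod (u - v))\<^sup>2 = (cmod u)\<^sup>2 + (cmod v)\<^sup>2 - 2 * Re (u * cnj v)"
  unfolding cmod_power2 by (simp add: power2_eq_square algebra_simps)

lemma cmod_add_i_mult_square: "(cmod (u + \<i> * v))\<^sup>2 = (cmod u)\<^sup>2 + (cmod v)\<^sup>2 + 2 * Im (u * cnj v)"
  unfolding cmod_power2 by (simp add: power2_eq_square algebra_simps)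

definition polarization :: "real \<Rightarrow> real \<Rightarrow> real \<Rightarrow> real \<Rightarrow> complex" where
  "polarization p q r s = Complex ((p + q - r) / 2) ((s - p - q) / 2)"

lemma polarization_add:
  "polarization (p + p') (q + q') (r + r') (s + s') = polarization p q r s + polarization p' q' r' s'"
  unfolding polarization_def by (simp add: complex_eq_iff field_simps)

lemma polarization_exact:
  "polarization ((cmod u)\<^sup>2) ((cmod v)\<^sup>2) ((cmod (u - v))\<^sup>2) ((cmod (u + \<i> * v))\<^sup>2) = u * cnj v"
  unfolding polarization_def cmod_diff_square cmod_add_i_mult_square
  by (simp add: complex_eq_iff)

lemma polarization_error:
  fixes u v :: complex
  assumes "\<bar>e1\<bar> \<le> \<delta>" "\<bar>e2\<bar> \<le> \<delta>" "\<bar>e3\<bar> \<le> \<delta>" "\<bar>e4\<bar> \<le> \<delta>"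
  shows "cmod (polarization ((cmod u)\<^sup>2 + e1) ((cmod v)\<^sup>2 + e2) ((cmod (u - v))\<^sup>2 + e3)
                 ((cmod (u + \<i> * v))\<^sup>2 + e4) - u * cnj v) \<le> (1 + sqrt 2) * \<delta>"
proof -
  have "(e1 + e2 - e3)\<^sup>2 \<le> (3 * \<delta>)\<^sup>2" "(e4 - e1 - e2)\<^sup>2 \<le> (3 * \<delta>)\<^sup>2"
    using assms by (subst abs_le_square_iff[symmetric]; simp)+
  moreover have "18 * \<delta>\<^sup>2 \<le> 4 * ((1 + sqrt 2) * \<delta>)\<^sup>2"
  proof -
    have "sqrt 2 \<ge> 1" by simp
    then have "8 * sqrt 2 - 6 \<ge> 0" by linarith
    then have "(8 * sqrt 2 - 6) * \<delta>\<^sup>2 \<ge> 0" by simp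
    moreover have "4 * ((1 + sqrt 2) * \<delta>)\<^sup>2 - 18 * \<delta>\<^sup>2 = (8 * sqrt 2 - 6) * \<delta>\<^sup>2"
      by (simp add: power2_eq_square algebra_simps)
    ultimately show ?thesis by linarith
  qed
  ultimately have "(Re (polarization e1 e2 e3 e4))\<^sup>2 + (Im (polarization e1 e2 e3 e4))\<^sup>2
      \<le> ((1 + sqrt 2) * \<delta>)\<^sup>2"
    unfolding polarization_def by (simp add: power_divide)
  moreover have "\<delta> \<ge> 0" using assms(1) by linarith
  ultimately have "cmod (polarization e1 e2 e3 e4) \<le> (1 + sqrt 2) * \<delta>"
    unfolding cmod_def by (simp add: real_le_lsqrt)
  then show ?thesis
    by (simp only: polarization_add polarization_exact add_diff_cancel_left')
qed

lemma sqrt_intensity_error: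
  fixes r \<epsilon> \<delta> m M :: real
  assumes "r \<ge> 0" "\<bar>\<epsilon>\<bar> \<le> \<delta>" "r\<^sup>2 - \<bar>\<epsilon>\<bar> \<ge> m * M\<^sup>2" "m > 0" "M > 0"
  shows "\<bar>sqrt (r\<^sup>2 + \<epsilon>) - r\<bar> \<le> \<delta> / (2 * sqrt m * M)"
proof -
  define s where "s = sqrt (r\<^sup>2 + \<epsilon>)"
  have lower_s: "m * M\<^sup>2 \<le> r\<^sup>2 + \<epsilon>" and lower_r: "m * M\<^sup>2 \<le> r\<^sup>2"
    using assms abs_ge_minus_self[of \<epsilon>] abs_ge_zero[of \<epsilon>] by linarith+
  have sqrt_mM: "sqrt (m * M\<^sup>2) = sqrt m * M"
    using assms by (simp add: real_sqrt_mult)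
  have s_ge: "s \<ge> sqrt m * M"
    using real_sqrt_le_mono[OF lower_s] unfolding s_def sqrt_mM .
  have r_ge: "r \<ge> sqrt m * M"
    using real_sqrt_le_mono[OF lower_r] \<open>r \<ge> 0\<close> unfolding sqrt_mM by simp
  have "sqrt m * M > 0" using assms by simp
  then have "\<bar>s - r\<bar> * (s + r) = \<bar>(s - r) * (s + r)\<bar>"
    using s_ge r_ge by (simp add: abs_mult)
  also have "(s - r) * (s + r) = s\<^sup>2 - r\<^sup>2"
    by (simp add: power2_eq_square algebra_simps)
  also have "s\<^sup>2 = r\<^sup>2 + \<epsilon>"
  proof -
    have "0 \<le> m * M\<^sup>2" using assms by simp
    then show ?thesis unfolding s_def using lower_s by simp
  qed
  finally have "\<bar>s - r\<bar> * (s + r) = \<bar>\<epsilon>\<bar>" by simp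
  moreover have "\<bar>s - r\<bar> * (2 * sqrt m * M) \<le> \<bar>s - r\<bar> * (s + r)"
    using s_ge r_ge by (intro mult_left_mono) auto
  ultimately have "\<bar>s - r\<bar> * (2 * sqrt m * M) \<le> \<delta>" using assms by linarith
  then show ?thesis using assms unfolding s_def by (simp add: field_simps)
qed

lemma phase_step_error:
  fixes a1 a2 v \<omega> z :: complex and b \<epsilon> M \<delta> m e C :: real
  assumes \<omega>: "cmod \<omega> = 1" and a1: "cmod a1 \<le> M" and a2: "cmod a2 \<le> M"
    and b: "b = (cmod a1)\<^sup>2 + \<epsilon>" and \<epsilon>: "\<bar>\<epsilon>\<bar> \<le> \<delta>" and lower: "(cmod a1)\<^sup>2 - \<bar>\<epsilon>\<bar> \<ge> m * M\<^sup>2"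
    and "m > 0" "M > 0"
    and z: "cmod (z - a1 * cnj a2) \<le> (1 + sqrt 2) * \<delta>" and v: "cmod (v - \<omega> * a1) \<le> e"
    and C: "C = ((1 + sqrt 2) * \<delta> + M\<^sup>2) / (m * M\<^sup>2)"
  shows "cmod (cnj z * v / complex_of_real b - \<omega> * a2) \<le> C * e + (2 + sqrt 2) / m * \<delta> / M"
proof -
  define u where "u = \<omega> * a1"
  define w where "w = a1 * cnj a2"
  define r where "r = (cmod a1)\<^sup>2"
  have mM: "m * M\<^sup>2 > 0" using \<open>m > 0\<close> \<open>M > 0\<close> by simp
  have r_pos: "r > 0" using lower mM abs_ge_zero[of \<epsilon>] unfolding r_def by linarith
  have b_ge: "b \<ge> m * M\<^sup>2" using b lower by linarith
  then have b_pos: "b > 0" using mM by linarith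
  have "\<delta> \<ge> 0" using \<epsilon> by linarith
  have "e \<ge> 0" using v norm_ge_zero order_trans by blast
  have "cnj a1 * a1 = complex_of_real r" unfolding r_def
    by (metis complex_norm_square mult.commute)
  then have target: "\<omega> * a2 = cnj w * u / complex_of_real r"
    using r_pos unfolding w_def u_def by (simp add: field_simps)
  \<comment> \<open>the three error sources: the noise in \<open>z\<close>, the error of \<open>v\<close>, and \<open>b \<noteq> |a\<^sub>1|\<^sup>2\<close>\<close>
  have decomposition: "cnj z * v / complex_of_real b - cnj w * u / complex_of_real r
      = cnj (z - w) * v / complex_of_real b + cnj w * (v - u) / complex_of_real b
        + cnj w * u * complex_of_real (r - b) / complex_of_real (b * r)"
    using r_pos b_pos by (simp add: field_simps)
  have u_le: "cmod u \<le> M" using \<omega> a1 by (simp add: u_def norm_mult)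
  have "cmod v \<le> M + e"
    using v u_le norm_triangle_ineq2[of v u] unfolding u_def by linarith
  then have "cmod (z - w) * cmod v / b \<le> (1 + sqrt 2) * \<delta> * (M + e) / b"
    using z b_pos \<open>\<delta> \<ge> 0\<close> unfolding w_def by (intro divide_right_mono mult_mono) auto
  then have bound1: "cmod (cnj (z - w) * v / complex_of_real b) \<le> (1 + sqrt 2) * \<delta> * (M + e) / b"
    using b_pos by (simp add: norm_mult norm_divide del: complex_cnj_diff)
  have w_le: "cmod w \<le> M * M" unfolding w_def using a1 a2
    by (simp add: norm_mult mult_mono')
  have bound2: "cmod (cnj w * (v - u) / complex_of_real b) \<le> M * M * e / b"
    using w_le v b_pos \<open>M > 0\<close> unfolding u_def
    by (simp add: norm_mult norm_divide divide_right_mono mult_mono)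
  have "cmod (cnj w * u * complex_of_real (r - b) / complex_of_real (b * r))
      = cmod w * cmod u * \<bar>r - b\<bar> / (b * r)"
    using b_pos r_pos by (simp add: norm_mult norm_divide del: of_real_diff)
  also have "\<dots> = cmod a1 * cmod a2 * cmod a1 * \<bar>\<epsilon>\<bar> / (b * (cmod a1)\<^sup>2)"
    using \<omega> unfolding w_def u_def r_def b by (simp add: norm_mult)
  also have "\<dots> = cmod a2 * \<bar>\<epsilon>\<bar> / b"
    using r_pos b_pos unfolding r_def by (auto simp: power2_eq_square field_simps)
  also have "\<dots> \<le> M * \<delta> / b"
    using a2 \<epsilon> b_pos \<open>M > 0\<close> by (intro divide_right_mono mult_mono) auto
  finally have bound3: "cmod (cnj w * u * complex_of_real (r - b) / complex_of_real (b * r)) \<le> M * \<delta> / b" .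
  have "cmod (cnj z * v / complex_of_real b - \<omega> * a2)
      \<le> cmod (cnj (z - w) * v / complex_of_real b) + cmod (cnj w * (v - u) / complex_of_real b)
        + cmod (cnj w * u * complex_of_real (r - b) / complex_of_real (b * r))"
    unfolding target decomposition by (rule order_trans[OF norm_triangle_ineq add_right_mono[OF norm_triangle_ineq]])
  also have "\<dots> \<le> ((1 + sqrt 2) * \<delta> * (M + e) + M * M * e + M * \<delta>) / b"
    using bound1 bound2 bound3 by (simp add: add_divide_distrib)
  also have "\<dots> \<le> ((1 + sqrt 2) * \<delta> * (M + e) + M * M * e + M * \<delta>) / (m * M\<^sup>2)"
    using b_ge mM \<open>\<delta> \<ge> 0\<close> \<open>e \<ge> 0\<close> \<open>M > 0\<close>
    by (intro divide_left_mono) (auto intro!: add_nonneg_nonneg mult_nonneg_nonneg)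
  also have "\<dots> = C * e + (2 + sqrt 2) / m * \<delta> / M"
    unfolding C using \<open>m > 0\<close> \<open>M > 0\<close> by (simp add: field_simps power2_eq_square)
  finally show ?thesis .
qed

text \<open>\<open>z k\<close> is the estimate of \<open>x\<^sub>k \<overline>x\<^sub>k\<^sub>+\<^sub>1\<close> and \<open>b k\<close> that of \<open>|x\<^sub>k|\<^sup>2\<close>.\<close>

fun phase_propagate :: "(nat \<Rightarrow> real) \<Rightarrow> (nat \<Rightarrow> complex) \<Rightarrow> nat \<Rightarrow> complex" where
  "phase_propagate b z 0 = 0"
| "phase_propagate b z (Suc 0) = complex_of_real (sqrt (b 1))"
| "phase_propagate b z (Suc (Suc k)) =
     cnj (z (Suc k)) * phase_propagate b z (Suc k) / complex_of_real (b (Suc k))"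

lemma geometric_error_Suc:
  fixes A B C D M :: real
  shows "(A * (\<Sum>i<Suc n. C ^ i) + C ^ Suc n / B) * D / M
       = C * ((A * (\<Sum>i<n. C ^ i) + C ^ n / B) * D / M) + A * D / M"
proof -
  have "(\<Sum>i<Suc n. C ^ i) = 1 + C * (\<Sum>i<n. C ^ i)"
    by (simp only: sum.lessThan_Suc_shift power_Suc sum_distrib_left[symmetric] power_0)
  then show ?thesis by (simp add: algebra_simps add_divide_distrib)
qed

lemma phase_propagate_error:
  fixes a z :: "nat \<Rightarrow> complex" and b \<epsilon> :: "nat \<Rightarrow> real"
  assumes "m > 0" "M > 0"
    and a_le: "\<forall>j\<in>{1..d}. cmod (a j) \<le> M"
    and b_eq: "\<forall>j\<in>{1..d}. b j = (cmod (a j))\<^sup>2 + \<epsilon> j"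
    and \<epsilon>_le: "\<forall>j\<in>{1..d}. \<bar>\<epsilon> j\<bar> \<le> \<delta>"
    and lower: "\<forall>j\<in>{1..d}. (cmod (a j))\<^sup>2 - \<bar>\<epsilon> j\<bar> \<ge> m * M\<^sup>2"
    and z_err: "\<forall>j\<in>{1..<d}. cmod (z j - a j * cnj (a (j + 1))) \<le> (1 + sqrt 2) * \<delta>"
    and C: "C = ((1 + sqrt 2) * \<delta> + M\<^sup>2) / (m * M\<^sup>2)"
    and k: "k \<in> {1..d}"
  shows "cmod (phase_propagate b z k - cnj (a 1) / complex_of_real (cmod (a 1)) * a k)
    \<le> ((2 + sqrt 2) / m * (\<Sum>i<k-1. C ^ i) + C ^ (k-1) / (2 * sqrt m)) * \<delta> / M"
proof -
  define \<omega> where "\<omega> = cnj (a 1) / complex_of_real (cmod (a 1))"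
  have "m * M\<^sup>2 > 0" using \<open>m > 0\<close> \<open>M > 0\<close> by simp
  moreover have "(cmod (a 1))\<^sup>2 - \<bar>\<epsilon> 1\<bar> \<ge> m * M\<^sup>2" using lower k by auto
  ultimately have "(cmod (a 1))\<^sup>2 > 0" using abs_ge_zero[of "\<epsilon> 1"] by linarith
  then have "a 1 \<noteq> 0" by auto
  then have \<omega>: "cmod \<omega> = 1" unfolding \<omega>_def by (simp add: norm_divide)
  have \<omega>_a1: "\<omega> * a 1 = complex_of_real (cmod (a 1))"
    using \<open>a 1 \<noteq> 0\<close> unfolding \<omega>_def
    by (simp add: field_simps complex_norm_square[symmetric] power2_eq_square)
  obtain n where n: "k = Suc n" "n < d" using k by (cases k) auto
  have "cmod (phase_propagate b z (Suc n) - \<omega> * a (Suc n))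
    \<le> ((2 + sqrt 2) / m * (\<Sum>i<n. C ^ i) + C ^ n / (2 * sqrt m)) * \<delta> / M"
    using \<open>n < d\<close>
  proof (induction n)
    case 0
    have "cmod (phase_propagate b z 1 - \<omega> * a 1) = \<bar>sqrt ((cmod (a 1))\<^sup>2 + \<epsilon> 1) - cmod (a 1)\<bar>"
      using 0 b_eq \<omega>_a1 by (simp del: of_real_diff add: of_real_diff[symmetric])
    also have "\<dots> \<le> \<delta> / (2 * sqrt m * M)"
      using 0 \<epsilon>_le lower \<open>m > 0\<close> \<open>M > 0\<close> by (intro sqrt_intensity_error) auto
    finally show ?case by simp
  next
    case (Suc n)
    have "cmod (phase_propagate b z (Suc (Suc n)) - \<omega> * a (Suc (Suc n)))
        \<le> C * (((2 + sqrt 2) / m * (\<Sum>i<n. C ^ i) + C ^ n / (2 * sqrt m)) * \<delta> / M)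
          + (2 + sqrt 2) / m * \<delta> / M"
      unfolding phase_propagate.simps
      using Suc a_le b_eq \<epsilon>_le lower z_err \<open>m > 0\<close> \<open>M > 0\<close> C
      by (intro phase_step_error[OF \<omega>]) auto
    then show ?case by (simp only: geometric_error_Suc)
  qed
  then show ?thesis using n unfolding \<omega>_def by simp
qed

definition reconstruction :: "nat \<Rightarrow> (nat \<Rightarrow> nat \<Rightarrow> complex) \<Rightarrow> (nat \<Rightarrow> real) \<Rightarrow> (nat \<Rightarrow> complex)" where
  "reconstruction d e b =
     (let z = (\<lambda>k. polarization (b k) (b (k + 1)) (b (d + k)) (b (2 * d - 1 + k)))
      in (\<lambda>l. \<Sum>j=1..d. phase_propagate b z j * e j l))"

lemma coord_lincomb:
  assumes "orthonormal_basis d e" "k \<in> {1..d}"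
  shows "coord d e (\<lambda>l. \<Sum>j=1..d. w j * e j l) k = w k"
proof -
  have "coord d e (\<lambda>l. \<Sum>j=1..d. w j * e j l) k = (\<Sum>j=1..d. w j * cinner d (e j) (e k))"
    unfolding coord_def cinner_def
    by (simp add: sum_distrib_right sum_distrib_left mult.assoc) (subst sum.swap, rule refl)
  also have "\<dots> = (\<Sum>j=1..d. if j = k then w k else 0)"
    using assms unfolding orthonormal_basis_def by (intro sum.cong) auto
  finally show ?thesis using assms(2) by simp
qed

text \<open>Parseval: a vector whose coordinates all vanish has \<open>\<Sum>\<^sub>l |x\<^sub>l|\<^sup>2 = 0\<close>.\<close>

lemma exists_nonzero_coord:
  assumes ob: "orthonormal_basis d e" and "\<not> is_zero_vec d x"
  shows "\<exists>k\<in>{1..d}. coord d e x k \<noteq> 0"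
proof (rule ccontr)
  assume zero: "\<not> (\<exists>k\<in>{1..d}. coord d e x k \<noteq> 0)"
  obtain c where c: "\<forall>l\<in>{1..d}. x l = (\<Sum>j=1..d. c j * e j l)"
    using ob unfolding orthonormal_basis_def by blast
  have "complex_of_real (\<Sum>l=1..d. (cmod (x l))\<^sup>2) = (\<Sum>l=1..d. x l * cnj (x l))"
    by (simp only: of_real_sum complex_norm_square)
  also have "\<dots> = (\<Sum>l=1..d. x l * cnj (\<Sum>j=1..d. c j * e j l))"
    using c by (intro sum.cong) auto
  also have "\<dots> = (\<Sum>j=1..d. cnj (c j) * coord d e x j)"
    unfolding coord_def cinner_def
    by (simp add: sum_distrib_left sum_distrib_right mult.commute mult.left_commute) (subst sum.swap, simp)
  also have "\<dots> = 0" using zero by simp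
  finally have "\<forall>l\<in>{1..d}. (cmod (x l))\<^sup>2 = 0"
    by (subst (asm) of_real_eq_0_iff, subst (asm) sum_nonneg_eq_0_iff) auto
  then show False using assms(2) unfolding is_zero_vec_def by simp
qed

lemma cmod_coord_le_sup_norm_coord: "k \<in> {1..d} \<Longrightarrow> cmod (coord d e x k) \<le> sup_norm_coord d e x"
  unfolding sup_norm_coord_def by (intro Max_ge) auto

lemma abs_le_sup_norm_real: "j \<in> {1..n} \<Longrightarrow> \<bar>eps j\<bar> \<le> sup_norm_real n eps"
  unfolding sup_norm_real_def by (intro Max_ge) auto

lemma noisy_meas_basis:
  assumes "k \<in> {1..d}"
  shows "noisy_meas d e x eps k = (cmod (coord d e x k))\<^sup>2 + eps k"
proof -
  have "k \<in> {1..3*d-2}" using assms by auto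
  then show ?thesis using assms unfolding noisy_meas_def meas_vec_def coord_def by simp
qed

lemma noisy_meas_diff:
  assumes "k \<in> {1..<d}"
  shows "noisy_meas d e x eps (d + k) = (cmod (coord d e x k - coord d e x (k + 1)))\<^sup>2 + eps (d + k)"
proof -
  have "meas_vec d e (d + k) = (\<lambda>l. e k l - e (k + 1) l)"
    using assms unfolding meas_vec_def by auto
  then have "cinner d x (meas_vec d e (d + k)) = coord d e x k - coord d e x (k + 1)"
    unfolding cinner_def coord_def by (simp add: sum_subtractf right_diff_distrib)
  moreover have "d + k \<in> {1..3*d-2}" using assms by auto
  ultimately show ?thesis unfolding noisy_meas_def by simp
qed

lemma noisy_meas_i_diff:
  assumes "k \<in> {1..<d}"
  shows "noisy_meas d e x eps (2 * d - 1 + k)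
       = (cmod (coord d e x k + \<i> * coord d e x (k + 1)))\<^sup>2 + eps (2 * d - 1 + k)"
proof -
  have "meas_vec d e (2 * d - 1 + k) = (\<lambda>l. e k l - \<i> * e (k + 1) l)"
    using assms unfolding meas_vec_def by auto
  moreover have "cinner d x (\<lambda>l. e k l - \<i> * e (k + 1) l) = coord d e x k + \<i> * coord d e x (k + 1)"
    unfolding cinner_def coord_def by (simp add: sum.distrib sum_distrib_left algebra_simps)
  moreover have "2 * d - 1 + k \<in> {1..3*d-2}" using assms by auto
  ultimately show ?thesis unfolding noisy_meas_def by simp
qed

lemma reconstruction_error:
  assumes ob: "orthonormal_basis d e" and "m > 0" and "\<not> is_zero_vec d x"
    and lower: "\<forall>j\<in>{1..d}. (cmod (coord d e x j))\<^sup>2 - \<bar>eps j\<bar> \<ge> m * (sup_norm_coord d e x)\<^sup>2"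
    and k: "k \<in> {1..d}"
  defines "M \<equiv> sup_norm_coord d e x" and "\<delta> \<equiv> sup_norm_real (3*d-2) eps"
    and "C \<equiv> ((1 + sqrt 2) * sup_norm_real (3*d-2) eps + (sup_norm_coord d e x)\<^sup>2)
      / (m * (sup_norm_coord d e x)\<^sup>2)"
  shows "cmod (coord d e (reconstruction d e (noisy_meas d e x eps)) k
      - cnj (coord d e x 1) / complex_of_real (cmod (coord d e x 1)) * coord d e x k)
    \<le> ((2 + sqrt 2) / m * (\<Sum>i<k-1. C ^ i) + C ^ (k-1) / (2 * sqrt m)) * \<delta> / M"
proof -
  let ?b = "noisy_meas d e x eps"
  define z where "z = (\<lambda>j. polarization (?b j) (?b (j + 1)) (?b (d + j)) (?b (2 * d - 1 + j)))"
  obtain j where "j \<in> {1..d}" "coord d e x j \<noteq> 0"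
    using exists_nonzero_coord[OF ob \<open>\<not> is_zero_vec d x\<close>] by blast
  then have "M > 0"
    unfolding M_def using cmod_coord_le_sup_norm_coord[of j d e x]
    by (meson less_le_trans zero_less_norm_iff)
  have \<epsilon>_le: "\<forall>j\<in>{1..3*d-2}. \<bar>eps j\<bar> \<le> \<delta>" unfolding \<delta>_def by (simp add: abs_le_sup_norm_real)
  have "\<forall>j\<in>{1..<d}. cmod (z j - coord d e x j * cnj (coord d e x (j + 1))) \<le> (1 + sqrt 2) * \<delta>"
  proof
    fix j assume j: "j \<in> {1..<d}"
    then have "j \<in> {1..d}" "j + 1 \<in> {1..d}" "j + 1 \<in> {1..3*d-2}" "j \<in> {1..3*d-2}"
      "d + j \<in> {1..3*d-2}" "2 * d - 1 + j \<in> {1..3*d-2}" by auto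
    then show "cmod (z j - coord d e x j * cnj (coord d e x (j + 1))) \<le> (1 + sqrt 2) * \<delta>"
      unfolding z_def noisy_meas_basis[OF \<open>j \<in> {1..d}\<close>] noisy_meas_basis[OF \<open>j + 1 \<in> {1..d}\<close>]
        noisy_meas_diff[OF j] noisy_meas_i_diff[OF j]
      using \<epsilon>_le by (intro polarization_error) auto
  qed
  then have "cmod (phase_propagate ?b z k
      - cnj (coord d e x 1) / complex_of_real (cmod (coord d e x 1)) * coord d e x k)
    \<le> ((2 + sqrt 2) / m * (\<Sum>i<k-1. C ^ i) + C ^ (k-1) / (2 * sqrt m)) * \<delta> / M"
    using \<open>m > 0\<close> \<open>M > 0\<close> lower \<epsilon>_le k unfolding M_def \<delta>_def C_def
    by (intro phase_propagate_error[where \<epsilon> = eps])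
      (auto simp: noisy_meas_basis cmod_coord_le_sup_norm_coord)
  moreover have "coord d e (reconstruction d e ?b) k = phase_propagate ?b z k"
    unfolding reconstruction_def Let_def z_def by (rule coord_lincomb[OF ob k])
  ultimately show ?thesis by simp
qed

theorem mainTheorem9:
  fixes d :: nat and e :: "nat \<Rightarrow> nat \<Rightarrow> complex"
  assumes "orthonormal_basis d e"
  shows "\<exists>F :: (nat \<Rightarrow> real) \<Rightarrow> (nat \<Rightarrow> complex).
    \<forall>(m::real) (x::nat \<Rightarrow> complex) (eps::nat \<Rightarrow> real).
      m > 0 \<longrightarrow> \<not> is_zero_vec d x \<longrightarrow>
      (\<forall>j\<in>{1..d}. (cmod (coord d e x j))^2 - \<bar>eps j\<bar> \<ge> m * (sup_norm_coord d e x)^2) \<longrightarrow>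
      (let C = ((1 + sqrt 2) * sup_norm_real (3*d-2) eps + (sup_norm_coord d e x)^2)
               / (m * (sup_norm_coord d e x)^2);
           y = F (noisy_meas d e x eps)
       in \<forall>k\<in>{1..d}.
            cmod (coord d e y k - (cnj (coord d e x 1) / complex_of_real (cmod (coord d e x 1))) * coord d e x k)
            \<le> ((2 + sqrt 2) / m * (\<Sum>i<k-1. C^i) + C^(k-1) / (2 * sqrt m))
               * sup_norm_real (3*d-2) eps / sup_norm_coord d e x)"
  unfolding Let_def
  by (intro exI[of _ "reconstruction d e"] allI impI ballI) (rule reconstruction_error[OF assms])

end
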